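(* Let $G$ be a $2$-connected cubic graph with a $2$-cut $C$, let $G_1,G_2$ be its marked $C$-components, and let $v\in V(G_1)$. Then $v$ is $\lambda$-matchable in $G$ if and only if $v$ is $\lambda$-matchable in $G_1$. Consequently, $\lambda(G)=\lambda(G_1)+\lambda(G_2)$.
   Context: Graphs are loopless but may have parallel edges. For a $2$-cut $C$ of a $2$-connected cubic graph $G$, $G-C$ has two components; adding to each an edge joining its two vertices of degree two gives the marked $C$-components. For a vertex $v$ of a cubic graph, a $v$-matching is a spanning subgraph in which $v$ has degree $3$ and every other vertex degree $1$; $v$ is $\lambda$-matchable if one exists; $\lambda$ counts such vertices. *)

theory Defs
  imports Main
begin

text \<open>A (loopless, possibly with parallel edges) multigraph is given by a vertex set V,
an edge set E and an endpoint map ends; each edge has exactly two distinct endpoints.\<close>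

definition multigraph :: "'v set \<Rightarrow> 'e set \<Rightarrow> ('e \<Rightarrow> 'v set) \<Rightarrow> bool" where
  "multigraph V E ends \<longleftrightarrow> finite V \<and> finite E \<and> (\<forall>e\<in>E. ends e \<subseteq> V \<and> card (ends e) = 2)"

definition degree :: "'e set \<Rightarrow> ('e \<Rightarrow> 'v set) \<Rightarrow> 'v \<Rightarrow> nat" where
  "degree E ends v = card {e\<in>E. v \<in> ends e}"

definition cubic :: "'v set \<Rightarrow> 'e set \<Rightarrow> ('e \<Rightarrow> 'v set) \<Rightarrow> bool" where
  "cubic V E ends \<longleftrightarrow> multigraph V E ends \<and> (\<forall>v\<in>V. degree E ends v = 3)"

definition adj_rel :: "'e set \<Rightarrow> ('e \<Rightarrow> 'v set) \<Rightarrow> ('v \<times> 'v) set" where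
  "adj_rel E ends = {(u, w). \<exists>e\<in>E. ends e = {u, w}}"

definition connected_graph :: "'v set \<Rightarrow> 'e set \<Rightarrow> ('e \<Rightarrow> 'v set) \<Rightarrow> bool" where
  "connected_graph V E ends \<longleftrightarrow> (\<forall>u\<in>V. \<forall>w\<in>V. (u, w) \<in> (adj_rel E ends)\<^sup>*)"

definition two_connected :: "'v set \<Rightarrow> 'e set \<Rightarrow> ('e \<Rightarrow> 'v set) \<Rightarrow> bool" where
  "two_connected V E ends \<longleftrightarrow> multigraph V E ends \<and> card V > 2 \<and> connected_graph V E ends \<and>
     (\<forall>x\<in>V. connected_graph (V - {x}) {e\<in>E. x \<notin> ends e} ends)"

definition comp_of :: "'v set \<Rightarrow> 'e set \<Rightarrow> ('e \<Rightarrow> 'v set) \<Rightarrow> 'v \<Rightarrow> 'v set" where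
  "comp_of V E ends v = {w\<in>V. (v, w) \<in> (adj_rel E ends)\<^sup>*}"

definition components :: "'v set \<Rightarrow> 'e set \<Rightarrow> ('e \<Rightarrow> 'v set) \<Rightarrow> 'v set set" where
  "components V E ends = comp_of V E ends ` V"

definition two_cut :: "'v set \<Rightarrow> 'e set \<Rightarrow> ('e \<Rightarrow> 'v set) \<Rightarrow> 'e set \<Rightarrow> bool" where
  "two_cut V E ends C \<longleftrightarrow> C \<subseteq> E \<and> card C = 2 \<and> card (components V (E - C) ends) = 2"

text \<open>Marked C-component on the vertex set V1 (a component of G - C): the edges of G - C
inside V1 (tagged Some) plus one new edge None joining the two vertices of degree two.\<close>
definition marked_edges :: "'e set \<Rightarrow> ('e \<Rightarrow> 'v set) \<Rightarrow> 'e set \<Rightarrow> 'v set \<Rightarrow> 'e option set" where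
  "marked_edges E ends C V1 = Some ` {e\<in>E - C. ends e \<subseteq> V1} \<union> {None}"

definition marked_ends :: "'e set \<Rightarrow> ('e \<Rightarrow> 'v set) \<Rightarrow> 'e set \<Rightarrow> 'v set \<Rightarrow> 'e option \<Rightarrow> 'v set" where
  "marked_ends E ends C V1 x =
     (case x of None \<Rightarrow> {u\<in>V1. degree (E - C) ends u = 2} | Some e \<Rightarrow> ends e)"

definition v_matching :: "'v set \<Rightarrow> 'e set \<Rightarrow> ('e \<Rightarrow> 'v set) \<Rightarrow> 'v \<Rightarrow> 'e set \<Rightarrow> bool" where
  "v_matching V E ends v M \<longleftrightarrow> M \<subseteq> E \<and> degree M ends v = 3 \<and> (\<forall>u\<in>V - {v}. degree M ends u = 1)"

definition lambda_matchable :: "'v set \<Rightarrow> 'e set \<Rightarrow> ('e \<Rightarrow> 'v set) \<Rightarrow> 'v \<Rightarrow> bool" where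
  "lambda_matchable V E ends v \<longleftrightarrow> v \<in> V \<and> (\<exists>M. v_matching V E ends v M)"

definition lambda_count :: "'v set \<Rightarrow> 'e set \<Rightarrow> ('e \<Rightarrow> 'v set) \<Rightarrow> nat" where
  "lambda_count V E ends = card {v\<in>V. lambda_matchable V E ends v}"

end

(*
  A v-matching of G restricts to a v-matching of the marked component G1: summing degrees
  over V1, whose size is even, shows that it contains both cut edges or neither, which
  corresponds to using or avoiding the marker edge.  Conversely, a v-matching of G1 extends
  to G by a perfect matching of V2, or of V2 minus the two ends of the cut edges when the
  marker edge is used.  These perfect matchings exist by Tutte's theorem: in a 2-connected
  cubic graph every odd proper vertex set has at least three boundary edges, so counting
  boundary edges verifies Tutte's condition for any even vertex set with at most four of
  them.  Tutte's theorem is proved from a maximal barrier with Hall's marriage theorem.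
  The count identity follows because V is the disjoint union of V1 and V2.
*)
theory Submission
  imports Defs
begin

section \<open>Hall's marriage theorem\<close>

definition hall_condition :: "'i set \<Rightarrow> ('i \<Rightarrow> 'a set) \<Rightarrow> bool" where
  "hall_condition I N \<longleftrightarrow> (\<forall>J\<subseteq>I. card J \<le> card (\<Union>(N ` J)))"

lemma hall_condition_card_pos:
  assumes "hall_condition I N" "i \<in> I"
  shows "0 < card (N i)"
proof -
  have "card {i} \<le> card (\<Union>(N ` {i}))"
    using assms unfolding hall_condition_def by blast
  then show ?thesis by simp
qed

lemma hall_condition_finite: "hall_condition I N \<Longrightarrow> i \<in> I \<Longrightarrow> finite (N i)"
  by (rule card_ge_0_finite[OF hall_condition_card_pos])

lemma hall_condition_remove_tight:
  assumes hall: "hall_condition I N" and "finite I" and J: "J \<subseteq> I"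
    and tight: "card (\<Union>(N ` J)) = card J"
  shows "hall_condition (I - J) (\<lambda>i. N i - \<Union>(N ` J))"
  unfolding hall_condition_def
proof (intro allI impI)
  fix J' assume J': "J' \<subseteq> I - J"
  have JJ': "J \<union> J' \<subseteq> I" using J J' by blast
  have fin: "finite (J \<union> J')" "finite (\<Union>(N ` (J \<union> J')))"
    using JJ' \<open>finite I\<close> hall_condition_finite[OF hall] finite_subset by blast+
  have "card J + card J' = card (J \<union> J')"
    using fin(1) J' by (subst card_Un_disjoint) auto
  also have "\<dots> \<le> card (\<Union>(N ` (J \<union> J')))"
    using hall JJ' unfolding hall_condition_def by blast
  also have "\<Union>(N ` (J \<union> J')) = \<Union>(N ` J) \<union> \<Union>((\<lambda>i. N i - \<Union>(N ` J)) ` J')"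
    by auto
  also have "card \<dots> = card J + card (\<Union>((\<lambda>i. N i - \<Union>(N ` J)) ` J'))"
    using fin(2) tight by (subst card_Un_disjoint) auto
  finally show "card J' \<le> card (\<Union>((\<lambda>i. N i - \<Union>(N ` J)) ` J'))"
    by simp
qed

lemma hall_condition_remove_slack:
  assumes hall: "hall_condition I N" and "i \<in> I"
    and no_tight: "\<forall>J. J \<noteq> {} \<longrightarrow> J \<subset> I \<longrightarrow> card (\<Union>(N ` J)) \<noteq> card J"
  shows "hall_condition (I - {i}) (\<lambda>j. N j - {b})"
  unfolding hall_condition_def
proof (intro allI impI)
  fix J assume J: "J \<subseteq> I - {i}"
  show "card J \<le> card (\<Union>((\<lambda>j. N j - {b}) ` J))"
  proof (cases "J = {}")
    case False
    with J \<open>i \<in> I\<close> have "J \<subset> I" by blast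
    then have "card J \<le> card (\<Union>(N ` J))" "card (\<Union>(N ` J)) \<noteq> card J"
      using hall no_tight False unfolding hall_condition_def by blast+
    then have "card J < card (\<Union>(N ` J))" by linarith
    also have "\<dots> \<le> card (\<Union>(N ` J) - {b}) + 1"
      using diff_card_le_card_Diff[of "{b}" "\<Union>(N ` J)"] by simp
    also have "\<Union>(N ` J) - {b} = \<Union>((\<lambda>j. N j - {b}) ` J)"
      by auto
    finally show ?thesis by simp
  qed simp
qed

lemma inj_on_if_split:
  assumes "J \<subseteq> I" "inj_on f J" "inj_on g (I - J)" "f ` J \<inter> g ` (I - J) = {}"
  shows "inj_on (\<lambda>i. if i \<in> J then f i else g i) I"
proof -
  let ?h = "\<lambda>i. if i \<in> J then f i else g i"
  have "inj_on ?h (J \<union> (I - J))"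
  proof (subst inj_on_Un, intro conjI)
    show "inj_on ?h J" using assms(2) by (simp add: inj_on_def)
    show "inj_on ?h (I - J)" using assms(3) by (simp add: inj_on_def)
    show "?h ` (J - (I - J)) \<inter> ?h ` ((I - J) - J) = {}" using assms(4) by auto
  qed
  then show ?thesis using assms(1) by (simp add: Un_absorb1)
qed

theorem hall_marriage:
  assumes "finite I" and "hall_condition I N"
  shows "\<exists>f. inj_on f I \<and> (\<forall>i\<in>I. f i \<in> N i)"
  using assms
proof (induction "card I" arbitrary: I N rule: less_induct)
  case less
  have IH: "\<exists>f. inj_on f I' \<and> (\<forall>i\<in>I'. f i \<in> N' i)"
    if "I' \<subset> I" "hall_condition I' N'" for I' and N' :: "'a \<Rightarrow> 'b set"
  proof (rule less.hyps)
    show "card I' < card I" using that(1) by (rule psubset_card_mono[OF less.prems(1)])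
    show "finite I'" using that(1) less.prems(1) finite_subset by blast
  qed fact
  show ?case
  proof (cases "\<exists>J. J \<noteq> {} \<and> J \<subset> I \<and> card (\<Union>(N ` J)) = card J")
    case True
    then obtain J where J: "J \<noteq> {}" "J \<subset> I" and tight: "card (\<Union>(N ` J)) = card J"
      by blast
    have "hall_condition J N"
      using less.prems(2) J unfolding hall_condition_def by auto
    with J(2) obtain f where f: "inj_on f J" "\<forall>i\<in>J. f i \<in> N i"
      using IH by blast
    have "I - J \<subset> I" using J by blast
    moreover have "hall_condition (I - J) (\<lambda>i. N i - \<Union>(N ` J))"
      using hall_condition_remove_tight[OF less.prems(2,1) _ tight] J(2) by blast
    ultimately obtain g where g: "inj_on g (I - J)" "\<forall>i\<in>I - J. g i \<in> N i - \<Union>(N ` J)"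
      using IH by blast
    let ?h = "\<lambda>i. if i \<in> J then f i else g i"
    have "inj_on ?h I"
      using f g J(2) by (intro inj_on_if_split) auto
    moreover have "\<forall>i\<in>I. ?h i \<in> N i" using f g by auto
    ultimately show ?thesis by blast
  next
    case no_tight: False
    show ?thesis
    proof (cases "I = {}")
      case False
      then obtain i where i: "i \<in> I" by blast
      obtain b where b: "b \<in> N i"
        using hall_condition_card_pos[OF less.prems(2) i] by fastforce
      have "\<forall>J. J \<noteq> {} \<longrightarrow> J \<subset> I \<longrightarrow> card (\<Union>(N ` J)) \<noteq> card J"
        using no_tight by blast
      then have "hall_condition (I - {i}) (\<lambda>j. N j - {b})"
        by (rule hall_condition_remove_slack[OF less.prems(2) i])
      moreover have "I - {i} \<subset> I" using i by blast
      ultimately obtain g where g: "inj_on g (I - {i})" "\<forall>j\<in>I - {i}. g j \<in> N j - {b}"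
        using IH by blast
      have "inj_on (g(i := b)) (insert i (I - {i}))"
        using g by (auto simp: inj_on_def)
      then have "inj_on (g(i := b)) I"
        using i by (simp add: insert_absorb)
      moreover have "\<forall>j\<in>I. (g(i := b)) j \<in> N j" using g b by auto
      ultimately show ?thesis by blast
    qed simp
  qed
qed

section \<open>Tutte's perfect matching theorem\<close>

definition induced_rel :: "'v set \<Rightarrow> ('v \<Rightarrow> 'v \<Rightarrow> bool) \<Rightarrow> ('v \<times> 'v) set" where
  "induced_rel X A = {(a, b). a \<in> X \<and> b \<in> X \<and> A a b}"

definition component_in :: "'v set \<Rightarrow> ('v \<Rightarrow> 'v \<Rightarrow> bool) \<Rightarrow> 'v \<Rightarrow> 'v set" where
  "component_in X A a = {b. (a, b) \<in> (induced_rel X A)\<^sup>*}"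

definition components_in :: "'v set \<Rightarrow> ('v \<Rightarrow> 'v \<Rightarrow> bool) \<Rightarrow> 'v set set" where
  "components_in X A = component_in X A ` X"

definition num_odd_components :: "'v set \<Rightarrow> ('v \<Rightarrow> 'v \<Rightarrow> bool) \<Rightarrow> nat" where
  "num_odd_components X A = card {K \<in> components_in X A. odd (card K)}"

text \<open>A perfect matching of \<open>U\<close> is encoded as the fixed-point-free involution that
  maps each vertex to its partner.\<close>
definition perfect_matching :: "'v set \<Rightarrow> ('v \<Rightarrow> 'v \<Rightarrow> bool) \<Rightarrow> ('v \<Rightarrow> 'v) \<Rightarrow> bool" where
  "perfect_matching U A m \<longleftrightarrow> (\<forall>u\<in>U. m u \<in> U \<and> m u \<noteq> u \<and> m (m u) = u \<and> A u (m u))"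

definition tutte_condition :: "'v set \<Rightarrow> ('v \<Rightarrow> 'v \<Rightarrow> bool) \<Rightarrow> bool" where
  "tutte_condition U A \<longleftrightarrow> (\<forall>S\<subseteq>U. num_odd_components (U - S) A \<le> card S)"

lemma tutte_conditionD: "tutte_condition U A \<Longrightarrow> S \<subseteq> U \<Longrightarrow> num_odd_components (U - S) A \<le> card S"
  unfolding tutte_condition_def by simp

lemma even_sum_plus_card_odd:
  assumes "finite F"
  shows "even (sum f F + card {K \<in> F. odd (f K :: nat)})"
  using assms
proof (induction F rule: finite_induct)
  case (insert x F)
  have "{K \<in> insert x F. odd (f K)} =
      (if odd (f x) then insert x {K \<in> F. odd (f K)} else {K \<in> F. odd (f K)})"
    by auto
  with insert show ?case by (cases "odd (f x)") auto
qed simp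

locale sym_graph =
  fixes A :: "'v \<Rightarrow> 'v \<Rightarrow> bool"
  assumes sym: "A x y \<Longrightarrow> A y x"
begin

lemma sym_induced_rel: "sym (induced_rel X A)"
  using sym unfolding sym_def induced_rel_def by blast

lemma induced_rtrancl_sym: "(a, b) \<in> (induced_rel X A)\<^sup>* \<Longrightarrow> (b, a) \<in> (induced_rel X A)\<^sup>*"
  using sym_rtrancl[OF sym_induced_rel] by (rule symD)

lemma induced_rtrancl_mem: "(a, b) \<in> (induced_rel X A)\<^sup>* \<Longrightarrow> a \<in> X \<Longrightarrow> b \<in> X"
  by (induction rule: rtrancl_induct) (auto simp: induced_rel_def)

lemma component_in_self: "a \<in> component_in X A a"
  unfolding component_in_def by simp

lemma component_in_subset: "a \<in> X \<Longrightarrow> component_in X A a \<subseteq> X"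
  unfolding component_in_def using induced_rtrancl_mem by blast

lemma component_in_eq:
  assumes "b \<in> component_in X A a"
  shows "component_in X A b = component_in X A a"
proof -
  have ab: "(a, b) \<in> (induced_rel X A)\<^sup>*" and ba: "(b, a) \<in> (induced_rel X A)\<^sup>*"
    using assms induced_rtrancl_sym unfolding component_in_def by auto
  show ?thesis
    unfolding component_in_def using rtrancl_trans[OF ab] rtrancl_trans[OF ba] by blast
qed

lemma adj_in_component_in: "a \<in> X \<Longrightarrow> b \<in> X \<Longrightarrow> A a b \<Longrightarrow> b \<in> component_in X A a"
  unfolding component_in_def induced_rel_def by auto

lemma components_in_eq: "K \<in> components_in X A \<Longrightarrow> a \<in> K \<Longrightarrow> component_in X A a = K"
  unfolding components_in_def using component_in_eq by blast

lemma components_in_subset: "K \<in> components_in X A \<Longrightarrow> K \<subseteq> X"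
  unfolding components_in_def using component_in_subset by blast

lemma components_in_nonempty: "K \<in> components_in X A \<Longrightarrow> K \<noteq> {}"
  unfolding components_in_def using component_in_self by blast

lemma components_in_disjoint:
  assumes "K \<in> components_in X A" "K' \<in> components_in X A" "K \<noteq> K'"
  shows "K \<inter> K' = {}"
proof (rule ccontr)
  assume "K \<inter> K' \<noteq> {}"
  then obtain a where "a \<in> K" "a \<in> K'" by blast
  then show False
    using components_in_eq[OF assms(1)] components_in_eq[OF assms(2)] assms(3) by metis
qed

lemma finite_components_in: "finite X \<Longrightarrow> finite (components_in X A)"
  unfolding components_in_def by simp

lemma component_in_in_components_in: "a \<in> X \<Longrightarrow> component_in X A a \<in> components_in X A"
  unfolding components_in_def by simp

lemma Union_components_in: "\<Union>(components_in X A) = X"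
proof
  show "\<Union>(components_in X A) \<subseteq> X"
    using components_in_subset by blast
  show "X \<subseteq> \<Union>(components_in X A)"
    using component_in_self component_in_in_components_in by blast
qed

lemma component_in_closed_subset:
  assumes "Y \<subseteq> X" "\<forall>a\<in>Y. \<forall>b\<in>X - Y. \<not> A a b" "a \<in> Y"
  shows "component_in X A a = component_in Y A a"
proof
  show "component_in Y A a \<subseteq> component_in X A a"
    unfolding component_in_def using rtrancl_mono[of "induced_rel Y A" "induced_rel X A"] assms(1)
    unfolding induced_rel_def by blast
next
  have "(a, b) \<in> (induced_rel Y A)\<^sup>*" if "(a, b) \<in> (induced_rel X A)\<^sup>*" for b
    using that
  proof (induction rule: rtrancl_induct)
    case (step y z)
    have "y \<in> Y" using induced_rtrancl_mem[OF step.IH] assms(3) .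
    moreover have "z \<in> X" "A y z" using step.hyps(2) unfolding induced_rel_def by auto
    ultimately have "(y, z) \<in> induced_rel Y A"
      using assms(2) unfolding induced_rel_def by blast
    then show ?case using step.IH by simp
  qed simp
  then show "component_in X A a \<subseteq> component_in Y A a" unfolding component_in_def by blast
qed

lemma components_in_split:
  assumes "Y \<subseteq> X" "\<forall>a\<in>Y. \<forall>b\<in>X - Y. \<not> A a b"
  shows "components_in X A = components_in Y A \<union> components_in (X - Y) A"
proof -
  have closed: "\<forall>a\<in>X - Y. \<forall>b\<in>X - (X - Y). \<not> A a b" using assms(2) sym by blast
  have "component_in X A ` Y = component_in Y A ` Y"
    using component_in_closed_subset[OF assms] by (rule image_cong[OF refl])
  moreover have "component_in X A ` (X - Y) = component_in (X - Y) A ` (X - Y)"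
    using component_in_closed_subset[OF _ closed] by (intro image_cong) auto
  moreover have "X = Y \<union> (X - Y)" using assms(1) by blast
  ultimately show ?thesis unfolding components_in_def by (metis image_Un)
qed

lemma components_in_closed:
  assumes "K \<in> components_in X A"
  shows "\<forall>a\<in>K. \<forall>b\<in>X - K. \<not> A a b"
proof (intro ballI notI)
  fix a b assume a: "a \<in> K" and b: "b \<in> X - K" and ab: "A a b"
  have "b \<in> component_in X A a"
    using adj_in_component_in[of a X b] a b ab components_in_subset[OF assms] by blast
  then show False using components_in_eq[OF assms a] b by blast
qed

lemma components_in_closedD:
  assumes "K \<in> components_in X A" "a \<in> K" "b \<in> X" "A a b"
  shows "b \<in> K"
  using components_in_closed[OF assms(1)] assms(2-4) by blast

lemma components_in_component:
  assumes "K \<in> components_in X A"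
  shows "components_in K A = {K}"
proof -
  have "component_in K A a = K" if "a \<in> K" for a
    using component_in_closed_subset[OF components_in_subset[OF assms] components_in_closed[OF assms] that]
      components_in_eq[OF assms that] by simp
  then show ?thesis unfolding components_in_def using components_in_nonempty[OF assms] by blast
qed

lemma components_in_Diff_subset:
  assumes D: "D \<in> components_in X A" and T: "T \<subseteq> D"
  shows "components_in (X - T) A = (components_in X A - {D}) \<union> components_in (D - T) A"
proof -
  have split: "components_in X A = {D} \<union> components_in (X - D) A"
    using components_in_split[OF components_in_subset[OF D] components_in_closed[OF D]]
      components_in_component[OF D] by simp
  have "D \<notin> components_in (X - D) A"
    using components_in_subset components_in_nonempty[OF D] by blast
  then have rest: "components_in (X - D) A = components_in X A - {D}" using split by auto
  have "\<forall>a\<in>D - T. \<forall>b\<in>(X - T) - (D - T). \<not> A a b"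
    using components_in_closed[OF D] by blast
  moreover have "D - T \<subseteq> X - T" using components_in_subset[OF D] by blast
  ultimately have "components_in (X - T) A = components_in (D - T) A \<union> components_in ((X - T) - (D - T)) A"
    using components_in_split by blast
  moreover have "(X - T) - (D - T) = X - D" using T by blast
  ultimately show ?thesis using rest by (simp add: Un_commute)
qed

lemma num_odd_components_Diff_subset:
  assumes "finite X" and D: "D \<in> components_in X A" and T: "T \<subseteq> D"
  shows "num_odd_components (X - T) A + (if odd (card D) then 1 else 0)
       = num_odd_components X A + num_odd_components (D - T) A"
proof -
  let ?odd = "\<lambda>F. {K \<in> F. odd (card K)}"
  have disj: "(components_in X A - {D}) \<inter> components_in (D - T) A = {}"
  proof (rule ccontr)
    assume "\<not> ?thesis"
    then obtain K where K: "K \<in> components_in X A" "K \<noteq> D" "K \<in> components_in (D - T) A"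
      by blast
    have "K \<subseteq> D" using components_in_subset[OF K(3)] by blast
    moreover have "K \<inter> D = {}" using components_in_disjoint[OF K(1) D K(2)] .
    ultimately show False using components_in_nonempty[OF K(3)] by blast
  qed
  have fin: "finite (components_in X A)" "finite (components_in (D - T) A)"
    using finite_components_in \<open>finite X\<close> finite_subset[OF components_in_subset[OF D]] by blast+
  have "num_odd_components (X - T) A
      = card (?odd (components_in X A - {D}) \<union> ?odd (components_in (D - T) A))"
    unfolding num_odd_components_def components_in_Diff_subset[OF D T] by (rule arg_cong[where f=card]) blast
  also have "\<dots> = card (?odd (components_in X A - {D})) + num_odd_components (D - T) A"
    unfolding num_odd_components_def using disj fin by (intro card_Un_disjoint) auto
  moreover have "num_odd_components X A
      = card (?odd (components_in X A - {D})) + (if odd (card D) then 1 else 0)"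
  proof (cases "odd (card D)")
    case True
    then have "?odd (components_in X A) = insert D (?odd (components_in X A - {D}))"
      using D by blast
    then show ?thesis unfolding num_odd_components_def using True fin(1) by simp
  next
    case False
    then have "?odd (components_in X A) = ?odd (components_in X A - {D})" by blast
    then show ?thesis unfolding num_odd_components_def using False by simp
  qed
  ultimately show ?thesis by simp
qed

lemma even_card_plus_num_odd_components:
  assumes "finite X"
  shows "even (card X + num_odd_components X A)"
proof -
  have "card X = card (\<Union>(components_in X A))" by (simp add: Union_components_in)
  also have "\<dots> = sum card (components_in X A)"
    using finite_components_in[OF assms] components_in_subset components_in_disjoint assms
    by (intro card_Union_disjoint) (auto simp: pairwise_def disjnt_def intro: finite_subset)
  finally show ?thesis
    unfolding num_odd_components_def
    using even_sum_plus_card_odd[OF finite_components_in[OF assms], of card] by simp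
qed

lemma components_in_Diff_neighbours:
  assumes "S \<subseteq> U" and KK: "KK \<subseteq> components_in (U - S) A"
  shows "KK \<subseteq> components_in (U - {s \<in> S. \<exists>k\<in>\<Union>KK. A s k}) A"
proof -
  define T where "T = {s \<in> S. \<exists>k\<in>\<Union>KK. A s k}"
  define Y where "Y = \<Union>KK"
  have Y_sub: "Y \<subseteq> U - S" using KK components_in_subset unfolding Y_def by blast
  have closed_S: "\<forall>a\<in>Y. \<forall>b\<in>(U - S) - Y. \<not> A a b"
  proof (intro ballI notI)
    fix a b assume a: "a \<in> Y" and b: "b \<in> U - S - Y" and ab: "A a b"
    obtain K where K: "K \<in> KK" "a \<in> K" using a unfolding Y_def by blast
    have "b \<in> K" using components_in_closed[of K "U - S"] K KK b ab by blast
    then show False using b K unfolding Y_def by blast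
  qed
  have closed_T: "\<forall>a\<in>Y. \<forall>b\<in>(U - T) - Y. \<not> A a b"
  proof (intro ballI notI)
    fix a b assume a: "a \<in> Y" and b: "b \<in> U - T - Y" and ab: "A a b"
    show False
    proof (cases "b \<in> S")
      case True
      then have "b \<in> T" using a ab sym unfolding T_def Y_def by blast
      then show False using b by blast
    next
      case False
      then show False using closed_S a b ab by blast
    qed
  qed
  have "KK \<subseteq> components_in Y A"
  proof
    fix K assume K: "K \<in> KK"
    then have "K \<in> components_in Y A \<union> components_in ((U - S) - Y) A"
      using components_in_split[OF Y_sub closed_S] KK by blast
    moreover have "K \<notin> components_in ((U - S) - Y) A"
      using components_in_subset components_in_nonempty K unfolding Y_def by blast
    ultimately show "K \<in> components_in Y A" by blast
  qed
  moreover have "Y \<subseteq> U - T" using Y_sub unfolding T_def by blast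
  ultimately show ?thesis
    using components_in_split[OF _ closed_T] unfolding T_def by blast
qed

end

locale tutte_barrier = sym_graph +
  fixes U S :: "'v set"
  assumes finite_U: "finite U" and tutte: "tutte_condition U A"
    and S_subset: "S \<subseteq> U" and barrier: "num_odd_components (U - S) A = card S"
    and maximal: "\<And>S'. S \<subseteq> S' \<Longrightarrow> S' \<subseteq> U \<Longrightarrow> card S' \<le> num_odd_components (U - S') A \<Longrightarrow> S' = S"
begin

lemma finite_S: "finite S"
  using S_subset finite_U finite_subset by blast

lemma finite_barrier_component: "K \<in> components_in (U - S) A \<Longrightarrow> finite K"
  using components_in_subset finite_U finite_subset by blast

text \<open>An even component \<open>K\<close> would make \<open>insert v S\<close>, for any \<open>v \<in> K\<close>, a larger barrier.\<close>
lemma barrier_component_odd: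
  assumes K: "K \<in> components_in (U - S) A"
  shows "odd (card K)"
proof (rule ccontr)
  assume even: "\<not> odd (card K)"
  obtain v where v: "v \<in> K" using components_in_nonempty[OF K] by blast
  have vS: "v \<notin> S" "v \<in> U" using v components_in_subset[OF K] by auto
  have "num_odd_components (U - S - {v}) A = card S + num_odd_components (K - {v}) A"
    using num_odd_components_Diff_subset[OF _ K, of "{v}"] v even finite_U barrier by simp
  moreover have "card K \<noteq> 0" using v finite_barrier_component[OF K] by auto
  then have "odd (card (K - {v}))"
    using even v finite_barrier_component[OF K] by simp
  then have "odd (num_odd_components (K - {v}) A)"
    using even_card_plus_num_odd_components[of "K - {v}"] finite_barrier_component[OF K] by simp
  then have "num_odd_components (K - {v}) A \<noteq> 0" by (rule odd_pos[THEN less_not_refl3, symmetric])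
  moreover have "U - S - {v} = U - insert v S" by blast
  ultimately have "card (insert v S) \<le> num_odd_components (U - insert v S) A"
    using vS finite_S by simp
  then have "insert v S = S" using maximal vS S_subset by blast
  then show False using vS by blast
qed

text \<open>A violating \<open>T\<close> leaves, by parity, at least \<open>card T + 2\<close> odd components, making
  \<open>S \<union> insert v T\<close> a larger barrier.\<close>
lemma barrier_component_tutte:
  assumes K: "K \<in> components_in (U - S) A" and v: "v \<in> K"
  shows "tutte_condition (K - {v}) A"
  unfolding tutte_condition_def
proof (intro allI impI)
  fix T assume T: "T \<subseteq> K - {v}"
  have KS: "K \<subseteq> U - S" using components_in_subset[OF K] .
  have finK: "finite K" using finite_barrier_component[OF K] .
  have finT: "finite T" using T finK finite_subset by blast
  show "num_odd_components (K - {v} - T) A \<le> card T"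
  proof (rule ccontr)
    assume many: "\<not> ?thesis"
    have "K - {v} - T = K - insert v T" by blast
    moreover have vT: "insert v T \<subseteq> K" "card (insert v T) = card T + 1"
      using T v finT by (auto simp: subset_Diff_insert)
    ultimately have "card (K - {v} - T) + card T + 1 = card K"
      using finK card_mono[OF finK] card_Diff_subset[OF finite_subset] by (metis add.assoc le_add_diff_inverse2)
    then have "odd (card (K - {v} - T) + card T + 1)"
      using barrier_component_odd[OF K] by simp
    moreover have "even (card (K - {v} - T) + num_odd_components (K - {v} - T) A)"
      using finK by (intro even_card_plus_num_odd_components) simp
    moreover have "t + 2 \<le> n" if "odd (a + t + 1)" "even (a + n)" "\<not> n \<le> t" for a t n :: nat
      using that by presburger
    ultimately have "card T + 2 \<le> num_odd_components (K - {v} - T) A"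
      using many by blast
    moreover have "num_odd_components (U - S - insert v T) A + 1
        = card S + num_odd_components (K - insert v T) A"
      using num_odd_components_Diff_subset[OF _ K vT(1)] finite_U
        barrier_component_odd[OF K] barrier by simp
    moreover have "K - insert v T = K - {v} - T" "U - S - insert v T = U - (S \<union> insert v T)"
      by blast+
    moreover have "card (S \<union> insert v T) = card S + card T + 1"
      using KS vT finT finite_S by (subst card_Un_disjoint) auto
    ultimately have "card (S \<union> insert v T) \<le> num_odd_components (U - (S \<union> insert v T)) A"
      by simp
    then have "S \<union> insert v T = S"
      by (rule maximal[rotated 2]) (use KS vT S_subset in auto)
    then show False using KS v by blast
  qed
qed

lemma barrier_hall_condition:
  "hall_condition (components_in (U - S) A) (\<lambda>K. {s \<in> S. \<exists>k\<in>K. A s k})"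
  unfolding hall_condition_def
proof (intro allI impI)
  fix KK assume KK: "KK \<subseteq> components_in (U - S) A"
  define T where "T = {s \<in> S. \<exists>k\<in>\<Union>KK. A s k}"
  have "KK \<subseteq> components_in (U - T) A"
    unfolding T_def by (rule components_in_Diff_neighbours[OF S_subset KK])
  moreover have "odd (card K)" if "K \<in> KK" for K
    using barrier_component_odd KK that by blast
  ultimately have "KK \<subseteq> {K \<in> components_in (U - T) A. odd (card K)}"
    by blast
  then have "card KK \<le> num_odd_components (U - T) A"
    unfolding num_odd_components_def using finite_U finite_components_in
    by (simp add: card_mono)
  also have "\<dots> \<le> card T"
  proof -
    have "T \<subseteq> U" using S_subset unfolding T_def by blast
    then show ?thesis by (rule tutte_conditionD[OF tutte])
  qed
  also have "T = \<Union>((\<lambda>K. {s \<in> S. \<exists>k\<in>K. A s k}) ` KK)"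
    unfolding T_def by auto
  finally show "card KK \<le> card (\<Union>((\<lambda>K. {s \<in> S. \<exists>k\<in>K. A s k}) ` KK))" .
qed

lemma barrier_partners:
  obtains f where "bij_betw f (components_in (U - S) A) S"
    and "\<And>K. K \<in> components_in (U - S) A \<Longrightarrow> \<exists>k\<in>K. A (f K) k"
proof -
  have fin: "finite (components_in (U - S) A)"
    using finite_U by (simp add: finite_components_in)
  obtain f where inj: "inj_on f (components_in (U - S) A)"
    and f: "\<forall>K\<in>components_in (U - S) A. f K \<in> {s \<in> S. \<exists>k\<in>K. A s k}"
    using hall_marriage[OF fin barrier_hall_condition] by blast
  have "{K \<in> components_in (U - S) A. odd (card K)} = components_in (U - S) A"
    using barrier_component_odd by blast
  then have "card (f ` components_in (U - S) A) = card S"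
    using barrier card_image[OF inj] unfolding num_odd_components_def by simp
  moreover have "f ` components_in (U - S) A \<subseteq> S" using f by blast
  ultimately have "f ` components_in (U - S) A = S"
    using card_subset_eq[OF finite_S] by blast
  then show thesis
    using that inj f unfolding bij_betw_def by blast
qed

text \<open>Each \<open>s \<in> S\<close> is matched to a neighbour \<open>k K\<close> in its partner component \<open>K\<close>, and
  \<open>K - {k K}\<close> is matched internally.\<close>
lemma barrier_perfect_matching:
  assumes match_rest: "\<And>K v. K \<in> components_in (U - S) A \<Longrightarrow> v \<in> K \<Longrightarrow> \<exists>m. perfect_matching (K - {v}) A m"
  shows "\<exists>m. perfect_matching U A m"
proof -
  let ?Ks = "components_in (U - S) A"
  obtain f where f: "bij_betw f ?Ks S" and f_adj: "\<And>K. K \<in> ?Ks \<Longrightarrow> \<exists>k\<in>K. A (f K) k"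
    using barrier_partners by blast
  define g where "g = the_inv_into ?Ks f"
  have g: "g s \<in> ?Ks" "f (g s) = s" if "s \<in> S" for s
    using that f unfolding g_def
    by (auto intro: the_inv_into_into f_the_inv_into_f_bij_betw simp: bij_betw_def)
  have g_f: "g (f K) = K" if "K \<in> ?Ks" for K
    using that f unfolding g_def bij_betw_def by (simp add: the_inv_into_f_f)
  define k where "k K = (SOME k. k \<in> K \<and> A (f K) k)" for K
  have k: "k K \<in> K" "A (f K) (k K)" if "K \<in> ?Ks" for K
    using someI_ex[OF f_adj[OF that, unfolded Bex_def]] unfolding k_def by auto
  define mK where "mK K = (SOME m. perfect_matching (K - {k K}) A m)" for K
  have mK: "perfect_matching (K - {k K}) A (mK K)" if "K \<in> ?Ks" for K
    using someI_ex[OF match_rest[OF that k(1)[OF that]]] unfolding mK_def .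
  define cK where "cK u = component_in (U - S) A u" for u
  have cK: "cK u \<in> ?Ks" "u \<in> cK u" if "u \<in> U - S" for u
    using that unfolding cK_def by (auto intro: component_in_in_components_in component_in_self)
  have cK_eq: "cK u = K" if "K \<in> ?Ks" "u \<in> K" for K u
    using that components_in_eq unfolding cK_def by blast
  have f_S: "f K \<in> S" if "K \<in> ?Ks" for K
    using f that by (auto simp: bij_betw_def)
  define m where "m u = (if u \<in> S then k (g u) else if u = k (cK u) then f (cK u) else mK (cK u) u)" for u
  have "m u \<in> U \<and> m u \<noteq> u \<and> m (m u) = u \<and> A u (m u)" if u: "u \<in> U" for u
  proof (cases "u \<in> S")
    case True
    define K where "K = g u"
    have K: "K \<in> ?Ks" "f K = u" using g True unfolding K_def by auto
    have kK: "k K \<in> U - S" using k(1)[OF K(1)] components_in_subset[OF K(1)] by blast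
    have "m (k K) = u"
      using kK K cK_eq[OF K(1) k(1)[OF K(1)]] unfolding m_def by simp
    then show ?thesis
      using True kK k(2)[OF K(1)] K unfolding m_def K_def by auto
  next
    case False
    define K where "K = cK u"
    have K: "K \<in> ?Ks" "u \<in> K" using cK u False unfolding K_def by auto
    show ?thesis
    proof (cases "u = k K")
      case True
      have "m (f K) = u" using f_S[OF K(1)] g_f[OF K(1)] True unfolding m_def by simp
      then show ?thesis
        using False True f_S[OF K(1)] S_subset k(2)[OF K(1)] sym unfolding m_def K_def by auto
    next
      case not_k: False
      have mu: "m u = mK K u" using False not_k unfolding m_def K_def by simp
      have uK: "u \<in> K - {k K}" using K not_k by blast
      have P: "mK K u \<in> K - {k K}" "mK K u \<noteq> u" "mK K (mK K u) = u" "A u (mK K u)"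
        using mK[OF K(1)] uK unfolding perfect_matching_def by blast+
      have "mK K u \<notin> S" using P(1) components_in_subset[OF K(1)] by blast
      moreover have "cK (mK K u) = K" using cK_eq K(1) P(1) by blast
      ultimately have "m (mK K u) = u" using P(1,3) unfolding m_def by simp
      then show ?thesis using mu P components_in_subset[OF K(1)] by auto
    qed
  qed
  then show ?thesis unfolding perfect_matching_def by blast
qed

end

context sym_graph
begin

theorem tutte:
  assumes "finite U" and "tutte_condition U A"
  shows "\<exists>m. perfect_matching U A m"
  using assms
proof (induction "card U" arbitrary: U rule: less_induct)
  case less
  define barriers where "barriers = {S. S \<subseteq> U \<and> num_odd_components (U - S) A = card S}"
  have "{} \<in> barriers"
    using tutte_conditionD[OF less.prems(2), of "{}"] unfolding barriers_def by simp
  moreover have "barriers \<subseteq> Pow U" unfolding barriers_def by blast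
  then have "finite barriers" using less.prems(1) finite_subset by blast
  ultimately obtain S where S: "S \<in> barriers" and S_max: "\<And>S'. S' \<in> barriers \<Longrightarrow> S \<subseteq> S' \<Longrightarrow> S = S'"
    using finite_has_maximal[of barriers] by blast
  interpret tutte_barrier A U S
  proof
    show "finite U" "tutte_condition U A" by (fact less.prems)+
    show "S \<subseteq> U" "num_odd_components (U - S) A = card S" using S unfolding barriers_def by auto
    fix S' assume S': "S \<subseteq> S'" "S' \<subseteq> U" "card S' \<le> num_odd_components (U - S') A"
    then have "S' \<in> barriers"
      using tutte_conditionD[OF less.prems(2) S'(2)] unfolding barriers_def by simp
    then show "S' = S" using S_max S'(1) by metis
  qed
  show ?case
  proof (rule barrier_perfect_matching)
    fix K v assume K: "K \<in> components_in (U - S) A" and v: "v \<in> K"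
    have "card (K - {v}) < card U"
      using components_in_subset[OF K] v by (intro psubset_card_mono[OF less.prems(1)]) blast
    moreover have "finite (K - {v})" using finite_barrier_component[OF K] by simp
    ultimately show "\<exists>m. perfect_matching (K - {v}) A m"
      using barrier_component_tutte[OF K v] by (rule less.hyps)
  qed
qed
end

section \<open>Boundaries in 2-connected cubic graphs\<close>

abbreviation adjacent :: "'e set \<Rightarrow> ('e \<Rightarrow> 'v set) \<Rightarrow> 'v \<Rightarrow> 'v \<Rightarrow> bool" where
  "adjacent F ends u w \<equiv> (u, w) \<in> adj_rel F ends"

lemma sym_graph_adjacent: "sym_graph (adjacent F ends)"
  by unfold_locales (auto simp: adj_rel_def insert_commute)

lemma components_eq_components_in:
  assumes "\<forall>e\<in>F. ends e \<subseteq> V"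
  shows "components V F ends = components_in V (adjacent F ends)"
proof -
  interpret sym_graph "adjacent F ends" by (rule sym_graph_adjacent)
  have rel: "induced_rel V (adjacent F ends) = adj_rel F ends"
    using assms unfolding induced_rel_def adj_rel_def by fastforce
  have "comp_of V F ends x = component_in V (adjacent F ends) x" if "x \<in> V" for x
    using induced_rtrancl_mem[of x _ V] that unfolding comp_of_def component_in_def rel by blast
  then show ?thesis
    unfolding components_def components_in_def by (rule image_cong[OF refl])
qed

lemma sum_degree_eq_sum_card_ends:
  assumes "finite F" "finite X"
  shows "(\<Sum>u\<in>X. degree F ends u) = (\<Sum>e\<in>F. card (ends e \<inter> X))"
proof -
  have "(\<Sum>u\<in>X. degree F ends u) = (\<Sum>u\<in>X. \<Sum>e\<in>F. if u \<in> ends e then 1 else 0)"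
    unfolding degree_def using assms(1) by (simp add: sum.If_cases Int_def)
  also have "\<dots> = (\<Sum>e\<in>F. \<Sum>u\<in>X. if u \<in> ends e then 1 else 0)"
    by (rule sum.swap)
  also have "\<dots> = (\<Sum>e\<in>F. card (ends e \<inter> X))"
    using assms(2) by (simp add: sum.If_cases Int_commute Int_def)
  finally show ?thesis .
qed

lemma rtrancl_adj_rel_leaves:
  assumes "(u, w) \<in> (adj_rel E ends)\<^sup>*" "u \<in> K" "w \<notin> K"
  shows "\<exists>e\<in>E. ends e \<inter> K \<noteq> {} \<and> \<not> ends e \<subseteq> K"
  using assms
proof (induction rule: rtrancl_induct)
  case (step y z)
  show ?case
  proof (cases "y \<in> K")
    case True
    obtain e where "e \<in> E" "ends e = {y, z}" using step.hyps(2) unfolding adj_rel_def by blast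
    then show ?thesis using True step.prems by blast
  qed (use step.IH step.prems in blast)
qed simp

lemma perfect_matching_edges:
  assumes m: "perfect_matching W (adjacent F ends) m"
  obtains P where "P \<subseteq> F" "\<And>e. e \<in> P \<Longrightarrow> ends e \<subseteq> W" "\<And>u. u \<in> W \<Longrightarrow> degree P ends u = 1"
proof -
  define pe where "pe u = (SOME e. e \<in> F \<and> ends e = {u, m u})" for u
  have m_W: "m u \<in> W" "m (m u) = u" if "u \<in> W" for u
    using m that unfolding perfect_matching_def by auto
  have pe: "pe u \<in> F \<and> ends (pe u) = {u, m u}" if "u \<in> W" for u
  proof -
    have "\<exists>e. e \<in> F \<and> ends e = {u, m u}"
      using m that unfolding perfect_matching_def adj_rel_def by blast
    then show ?thesis unfolding pe_def by (rule someI_ex)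
  qed
  have pe_partner: "pe (m u) = pe u" if "u \<in> W" for u
  proof -
    have "{m u, m (m u)} = {u, m u}" using m_W[OF that] by auto
    then show ?thesis unfolding pe_def by simp
  qed
  show thesis
  proof
    show "pe ` W \<subseteq> F" using pe by blast
    show "ends e \<subseteq> W" if "e \<in> pe ` W" for e
      using that pe m_W by auto
    show "degree (pe ` W) ends u = 1" if u: "u \<in> W" for u
    proof -
      have "{e \<in> pe ` W. u \<in> ends e} = {pe u}"
      proof
        show "{pe u} \<subseteq> {e \<in> pe ` W. u \<in> ends e}" using u pe[OF u] by auto
        show "{e \<in> pe ` W. u \<in> ends e} \<subseteq> {pe u}"
        proof
          fix e assume "e \<in> {e \<in> pe ` W. u \<in> ends e}"
          then obtain w where w: "w \<in> W" "e = pe w" "u \<in> ends (pe w)" by blast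
          then have "u = w \<or> u = m w" using pe[OF w(1)] by auto
          then show "e \<in> {pe u}" using w pe_partner[OF w(1)] by auto
        qed
      qed
      then show ?thesis unfolding degree_def by simp
    qed
  qed
qed

locale two_connected_cubic =
  fixes V :: "'v set" and E :: "'e set" and ends :: "'e \<Rightarrow> 'v set"
  assumes two_connected: "two_connected V E ends" and cubic: "cubic V E ends"
begin

definition boundary :: "'v set \<Rightarrow> 'e set" where
  "boundary K = {e \<in> E. ends e \<inter> K \<noteq> {} \<and> \<not> ends e \<subseteq> K}"

lemma finite_V: "finite V" and finite_E: "finite E"
  and ends_subset: "e \<in> E \<Longrightarrow> ends e \<subseteq> V" and card_ends: "e \<in> E \<Longrightarrow> card (ends e) = 2"
  using cubic unfolding cubic_def multigraph_def by auto

lemma degree_eq_3: "x \<in> V \<Longrightarrow> degree E ends x = 3"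
  using cubic unfolding cubic_def by blast

lemma ends_eq_pair:
  assumes "e \<in> E" "p \<in> ends e" "q \<in> ends e" "p \<noteq> q"
  shows "ends e = {p, q}"
proof -
  obtain a b where "ends e = {a, b}" using card_ends[OF assms(1)] by (meson card_2_iff)
  then show ?thesis using assms(2-4) by auto
qed

lemma connected: "connected_graph V E ends"
  using two_connected unfolding two_connected_def by simp

lemma no_cut_vertex: "x \<in> V \<Longrightarrow> connected_graph (V - {x}) {e \<in> E. x \<notin> ends e} ends"
  using two_connected unfolding two_connected_def by simp

lemma finite_boundary: "finite (boundary K)"
  unfolding boundary_def using finite_E by simp

lemma boundary_nonempty:
  assumes "K \<subseteq> V" "K \<noteq> {}" "K \<noteq> V"
  shows "boundary K \<noteq> {}"
proof -
  obtain u w where u: "u \<in> K" and w: "w \<in> V" "w \<notin> K" using assms by blast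
  then have "(u, w) \<in> (adj_rel E ends)\<^sup>*"
    using connected assms(1) unfolding connected_graph_def by blast
  from rtrancl_adj_rel_leaves[OF this u w(2)] show ?thesis
    unfolding boundary_def by blast
qed

text \<open>A single boundary edge \<open>e\<close> with end \<open>p \<in> K\<close> would make \<open>p\<close> a cut vertex: the
  other two edges at \<open>p\<close> lead into \<open>K\<close>, and every path from \<open>K - {p}\<close> to the outside
  must pass through \<open>e\<close>, hence through \<open>p\<close>.\<close>
lemma boundary_not_singleton:
  assumes K: "K \<subseteq> V" "K \<noteq> {}" "K \<noteq> V"
  shows "boundary K \<noteq> {e}"
proof
  assume single: "boundary K = {e}"
  then have eE: "e \<in> E" and "ends e \<inter> K \<noteq> {}" "\<not> ends e \<subseteq> K"
    unfolding boundary_def by auto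
  then obtain p q where p: "p \<in> ends e" "p \<in> K" and q: "q \<in> ends e" "q \<notin> K"
    by blast
  have pV: "p \<in> V" using p K by blast
  have "\<not> {e \<in> E. p \<in> ends e} \<subseteq> {e}"
  proof
    assume "{e \<in> E. p \<in> ends e} \<subseteq> {e}"
    then have "card {e \<in> E. p \<in> ends e} \<le> 1" using card_mono[of "{e}"] by simp
    then show False using degree_eq_3[OF pV] unfolding degree_def by simp
  qed
  then obtain e2 where e2: "e2 \<in> E" "p \<in> ends e2" "e2 \<noteq> e" by blast
  have "ends e2 \<subseteq> K" using single e2 p unfolding boundary_def by blast
  moreover obtain p' where "p' \<in> ends e2" "p' \<noteq> p"
    using card_ends[OF e2(1)] by (metis card_2_iff insertCI)
  ultimately have p': "p' \<in> K - {p}" by blast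
  have "connected_graph (V - {p}) {e \<in> E. p \<notin> ends e} ends"
    by (rule no_cut_vertex[OF pV])
  moreover have "p' \<in> V - {p}" "q \<in> V - {p}" using p' q p K ends_subset[OF eE] by auto
  ultimately have "(p', q) \<in> (adj_rel {e \<in> E. p \<notin> ends e} ends)\<^sup>*"
    unfolding connected_graph_def by blast
  then obtain e3 where "e3 \<in> E" "p \<notin> ends e3" "ends e3 \<inter> (K - {p}) \<noteq> {}" "\<not> ends e3 \<subseteq> K - {p}"
    using rtrancl_adj_rel_leaves[of p' q _ ends "K - {p}"] p' q by blast
  then have "e3 \<in> boundary K" unfolding boundary_def by blast
  then show False using single \<open>p \<notin> ends e3\<close> p(1) by auto
qed

lemma card_boundary_ge_2:
  assumes "K \<subseteq> V" "K \<noteq> {}" "K \<noteq> V"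
  shows "2 \<le> card (boundary K)"
proof -
  have "card (boundary K) \<noteq> 0" using boundary_nonempty[OF assms] finite_boundary by simp
  moreover have "card (boundary K) \<noteq> 1" using boundary_not_singleton[OF assms] by (metis card_1_singletonE)
  ultimately show ?thesis by linarith
qed

lemma card_ends_Int:
  assumes "e \<in> E"
  shows "card (ends e \<inter> K) = 2 * (if ends e \<subseteq> K then 1 else 0) + (if e \<in> boundary K then 1 else 0)"
proof -
  obtain p q where "ends e = {p, q}" "p \<noteq> q" using card_ends[OF assms] by (meson card_2_iff)
  then show ?thesis unfolding boundary_def using assms by (cases "p \<in> K"; cases "q \<in> K") auto
qed

lemma sum_degree_split:
  assumes "F \<subseteq> E" "finite K"
  shows "(\<Sum>u\<in>K. degree F ends u) = 2 * card {e \<in> F. ends e \<subseteq> K} + card (F \<inter> boundary K)"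
proof -
  have finF: "finite F" using assms(1) finite_E finite_subset by blast
  have "(\<Sum>u\<in>K. degree F ends u) = (\<Sum>e\<in>F. card (ends e \<inter> K))"
    using sum_degree_eq_sum_card_ends[OF finF assms(2)] .
  also have "\<dots> = (\<Sum>e\<in>F. 2 * (if ends e \<subseteq> K then 1 else 0) + (if e \<in> boundary K then 1 else 0))"
    by (rule sum.cong[OF refl], rule card_ends_Int) (use assms(1) in blast)
  also have "\<dots> = 2 * (\<Sum>e\<in>F. if ends e \<subseteq> K then 1 else 0) + (\<Sum>e\<in>F. if e \<in> boundary K then 1 else 0)"
    by (simp add: sum.distrib sum_distrib_left)
  also have "\<dots> = 2 * card {e \<in> F. ends e \<subseteq> K} + card (F \<inter> boundary K)"
    using finF by (simp add: sum.If_cases Int_def)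
  finally show ?thesis .
qed

lemma cubic_card_boundary:
  assumes "K \<subseteq> V"
  shows "3 * card K = 2 * card {e \<in> E. ends e \<subseteq> K} + card (boundary K)"
proof -
  have "finite K" using assms finite_V finite_subset by blast
  have "(\<Sum>u\<in>K. degree E ends u) = 3 * card K"
    using degree_eq_3 assms by (simp add: subset_iff)
  moreover have "E \<inter> boundary K = boundary K" unfolding boundary_def by blast
  ultimately show ?thesis using sum_degree_split[OF subset_refl \<open>finite K\<close>] by simp
qed

lemma card_boundary_ge_3:
  assumes "K \<subseteq> V" "K \<noteq> {}" "K \<noteq> V" "odd (card K)"
  shows "3 \<le> card (boundary K)"
proof -
  have "odd (3 * card K)" using assms(4) by simp
  then have "odd (2 * card {e \<in> E. ends e \<subseteq> K} + card (boundary K))"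
    by (subst cubic_card_boundary[OF assms(1), symmetric])
  then have "odd (card (boundary K))" by simp
  then have "card (boundary K) \<noteq> 2" by auto
  then show ?thesis using card_boundary_ge_2[OF assms(1-3)] by linarith
qed

interpretation adjacency: sym_graph "adjacent E ends"
  by (rule sym_graph_adjacent)

lemma adjacent_if_ends:
  assumes "e \<in> E" "p \<in> ends e" "q \<in> ends e" "p \<noteq> q"
  shows "adjacent E ends p q"
  using ends_eq_pair[OF assms] assms(1) unfolding adj_rel_def by blast

lemma boundary_component_subset:
  assumes K: "K \<in> components_in (W - S) (adjacent E ends)"
  shows "boundary K \<subseteq> {e \<in> E. ends e \<inter> S \<noteq> {}} \<union> boundary W"
proof
  fix e assume e: "e \<in> boundary K"
  then obtain p r where eE: "e \<in> E" and p: "p \<in> ends e" "p \<in> K" and r: "r \<in> ends e" "r \<notin> K"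
    unfolding boundary_def by blast
  have KW: "K \<subseteq> W - S" using adjacency.components_in_subset[OF K] .
  consider "r \<in> S" | "r \<in> W - S" | "r \<notin> W" by blast
  then show "e \<in> {e \<in> E. ends e \<inter> S \<noteq> {}} \<union> boundary W"
  proof cases
    case 1
    then show ?thesis using eE r by blast
  next
    case 2
    have "p \<noteq> r" using p r by blast
    with 2 have "r \<in> K"
      using adjacency.components_in_closedD[OF K p(2) _ adjacent_if_ends[OF eE p(1) r(1)]] by blast
    then show ?thesis using r by blast
  next
    case 3
    then show ?thesis using eE p r(1) KW unfolding boundary_def by blast
  qed
qed

lemma boundary_components_disjoint:
  assumes K: "K \<in> components_in X (adjacent E ends)" and K': "K' \<in> components_in X (adjacent E ends)"
    and "K \<noteq> K'"
  shows "boundary K \<inter> boundary K' = {}"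
proof (rule ccontr)
  assume "boundary K \<inter> boundary K' \<noteq> {}"
  then obtain e p r where eE: "e \<in> E" and p: "p \<in> ends e" "p \<in> K" and r: "r \<in> ends e" "r \<notin> K"
    and meets: "ends e \<inter> K' \<noteq> {}"
    unfolding boundary_def by blast
  have "p \<noteq> r" using p r by blast
  have "K \<inter> K' = {}" using adjacency.components_in_disjoint[OF K K' assms(3)] .
  then have "r \<in> K'" using meets ends_eq_pair[OF eE p(1) r(1) \<open>p \<noteq> r\<close>] p by auto
  then have "r \<in> K"
    using adjacency.components_in_closedD[OF K p(2) _ adjacent_if_ends[OF eE p(1) r(1) \<open>p \<noteq> r\<close>]]
      adjacency.components_in_subset[OF K'] by blast
  then show False using r by blast
qed

text \<open>Counting boundary edges: each odd component of \<open>W - S\<close> sends at least three edges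
  into \<open>S\<close> or out of \<open>W\<close>, while at most \<open>3 |S| + 4\<close> such edges exist; parity
  rules out exactly \<open>|S| + 1\<close> odd components.\<close>
lemma tutte_condition_small_boundary:
  assumes W: "W \<subseteq> V" "W \<noteq> V" "even (card W)" "card (boundary W) \<le> 4"
  shows "tutte_condition W (adjacent E ends)"
  unfolding tutte_condition_def
proof (intro allI impI)
  fix S assume S: "S \<subseteq> W"
  have finW: "finite W" using W(1) finite_V finite_subset by blast
  have finS: "finite S" using S finW finite_subset by blast
  define Q where "Q = {K \<in> components_in (W - S) (adjacent E ends). odd (card K)}"
  have finQ: "finite Q"
    unfolding Q_def using adjacency.finite_components_in[of "W - S"] finW by simp
  have Q: "K \<in> components_in (W - S) (adjacent E ends)" "odd (card K)" if "K \<in> Q" for K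
    using that unfolding Q_def by auto
  define ES where "ES = {e \<in> E. ends e \<inter> S \<noteq> {}}"
  have "3 * card Q = (\<Sum>K\<in>Q. 3)" by simp
  also have "\<dots> \<le> (\<Sum>K\<in>Q. card (boundary K))"
  proof (rule sum_mono, rule card_boundary_ge_3)
    fix K assume K: "K \<in> Q"
    show "K \<subseteq> V" "K \<noteq> V" "K \<noteq> {}" "odd (card K)"
      using adjacency.components_in_subset[OF Q(1)[OF K]] adjacency.components_in_nonempty[OF Q(1)[OF K]]
        Q(2)[OF K] W(1,2) by auto
  qed
  also have "\<dots> = card (\<Union>(boundary ` Q))"
  proof (rule card_UN_disjoint[symmetric, OF finQ])
    show "\<forall>K\<in>Q. finite (boundary K)" using finite_boundary by blast
    show "\<forall>K\<in>Q. \<forall>K'\<in>Q. K \<noteq> K' \<longrightarrow> boundary K \<inter> boundary K' = {}"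
      using boundary_components_disjoint[OF Q(1) Q(1)] by blast
  qed
  also have "\<dots> \<le> card (ES \<union> boundary W)"
    using boundary_component_subset Q(1) finite_E finite_boundary unfolding ES_def
    by (intro card_mono) auto
  also have "\<dots> \<le> card ES + 4"
    using card_Un_le[of ES "boundary W"] W(4) by simp
  also have "card ES \<le> 3 * card S"
  proof -
    have "ES = (\<Union>s\<in>S. {e \<in> E. s \<in> ends e})" unfolding ES_def by blast
    then have "card ES \<le> (\<Sum>s\<in>S. degree E ends s)"
      unfolding degree_def using card_UN_le[OF finS] by simp
    also have "\<dots> = 3 * card S" using degree_eq_3 S W(1) by (simp add: subset_iff)
    finally show ?thesis .
  qed
  finally have "card Q \<le> card S + 1" by simp
  moreover have "even (card (W - S) + card Q)"
    using adjacency.even_card_plus_num_odd_components[of "W - S"] finW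
    unfolding num_odd_components_def Q_def by simp
  then have "even (card S + card Q)"
    using W(3) S finS card_Diff_subset[OF finS S] card_mono[OF finW S] by (simp add: even_diff_nat)
  ultimately show "num_odd_components (W - S) (adjacent E ends) \<le> card S"
    unfolding num_odd_components_def Q_def[symmetric] by presburger
qed

lemma small_boundary_perfect_matching:
  assumes "W \<subseteq> V" "W \<noteq> V" "even (card W)" "card (boundary W) \<le> 4"
  obtains P where "P \<subseteq> E" "\<And>e. e \<in> P \<Longrightarrow> ends e \<subseteq> W" "\<And>u. u \<in> W \<Longrightarrow> degree P ends u = 1"
proof -
  have "finite W" using assms(1) finite_V finite_subset by blast
  then obtain m where "perfect_matching W (adjacent E ends) m"
    using adjacency.tutte tutte_condition_small_boundary[OF assms] by blast
  then show thesis using perfect_matching_edges that by blast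
qed

end

section \<open>The two sides of a 2-cut\<close>

definition cut_vertices :: "'e set \<Rightarrow> ('e \<Rightarrow> 'v set) \<Rightarrow> 'v set \<Rightarrow> 'v set" where
  "cut_vertices C ends X = {u \<in> X. \<exists>c\<in>C. u \<in> ends c}"

text \<open>The lift of an edge set \<open>M1\<close> of a marked component: its real edges, the cut edges in
  place of the marker edge \<open>None\<close>, and an edge set \<open>P\<close> on the other side.\<close>
definition lifted_edges :: "'e set \<Rightarrow> 'e option set \<Rightarrow> 'e set \<Rightarrow> 'e set" where
  "lifted_edges C M1 P = {e. Some e \<in> M1} \<union> (if None \<in> M1 then C else {}) \<union> P"

locale two_cut_sides = two_connected_cubic V E ends
    for V :: "'v set" and E :: "'e set" and ends :: "'e \<Rightarrow> 'v set" +
  fixes C :: "'e set" and V1 V2 :: "'v set"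
  assumes two_cut: "two_cut V E ends C"
    and V1: "V1 \<in> components V (E - C) ends" and V2: "V2 \<in> components V (E - C) ends"
    and sides_distinct: "V1 \<noteq> V2"
begin

lemma two_cut_sides_swap: "two_cut_sides V E ends C V2 V1"
  using two_cut V1 V2 sides_distinct two_connected_cubic_axioms
  unfolding two_cut_sides_def two_cut_sides_axioms_def by blast

lemma C_subset: "C \<subseteq> E" and card_C: "card C = 2" and finite_C: "finite C"
  using two_cut finite_E finite_subset unfolding two_cut_def by auto

interpretation cut_adjacency: sym_graph "adjacent (E - C) ends"
  by (rule sym_graph_adjacent)

lemma components_minus_cut: "components V (E - C) ends = components_in V (adjacent (E - C) ends)"
  using ends_subset by (intro components_eq_components_in) blast

lemma components_minus_cut_eq: "components V (E - C) ends = {V1, V2}"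
proof -
  have card2: "card (components V (E - C) ends) = 2" using two_cut unfolding two_cut_def by simp
  then have "finite (components V (E - C) ends)" by (simp add: card_ge_0_finite)
  moreover have "{V1, V2} \<subseteq> components V (E - C) ends" using V1 V2 by blast
  moreover have "card {V1, V2} = 2" using sides_distinct by simp
  ultimately show ?thesis using card2 by (metis card_subset_eq)
qed

lemma sides_disjoint: "V1 \<inter> V2 = {}"
  using cut_adjacency.components_in_disjoint V1 V2 sides_distinct
  unfolding components_minus_cut by blast

lemma sides_Un: "V1 \<union> V2 = V"
  using cut_adjacency.Union_components_in[of V] components_minus_cut_eq
  unfolding components_minus_cut by simp

lemma V1_subset: "V1 \<subseteq> V" and V2_subset: "V2 \<subseteq> V"
  using sides_Un by blast+

lemma V1_nonempty: "V1 \<noteq> {}"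
  using cut_adjacency.components_in_nonempty V1 unfolding components_minus_cut by blast

lemma V2_nonempty: "V2 \<noteq> {}"
  using cut_adjacency.components_in_nonempty V2 unfolding components_minus_cut by blast

lemma side_closed:
  assumes X: "X \<in> components V (E - C) ends" and e: "e \<in> E - C" and p: "p \<in> ends e" "p \<in> X"
  shows "ends e \<subseteq> X"
proof
  fix q assume q: "q \<in> ends e"
  show "q \<in> X"
  proof (cases "q = p")
    case False
    have "ends e = {p, q}" using ends_eq_pair[of e p q] e p q False by blast
    then have "adjacent (E - C) ends p q" using e unfolding adj_rel_def by blast
    moreover have "q \<in> V" using q e ends_subset by blast
    ultimately show ?thesis
      using cut_adjacency.components_in_closedD[OF X[unfolded components_minus_cut] p(2)] by blast
  qed (use p in simp)
qed

lemma boundary_V1: "boundary V1 = C"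
proof -
  have "boundary V1 \<subseteq> C"
  proof
    fix e assume e: "e \<in> boundary V1"
    then obtain p where "e \<in> E" "p \<in> ends e" "p \<in> V1" "\<not> ends e \<subseteq> V1"
      unfolding boundary_def by blast
    then show "e \<in> C" using side_closed[OF V1, of e p] by blast
  qed
  moreover have "V1 \<noteq> V" using sides_disjoint V2_nonempty V2_subset by blast
  then have "2 \<le> card (boundary V1)" using card_boundary_ge_2 V1_subset V1_nonempty by blast
  ultimately show ?thesis using card_C finite_C by (metis card_seteq)
qed

lemma card_cut_edge_Int_V1:
  assumes "c \<in> C"
  shows "card (ends c \<inter> V1) = 1"
proof -
  have c: "c \<in> boundary V1" using assms boundary_V1 by simp
  then have "c \<in> E" "\<not> ends c \<subseteq> V1" unfolding boundary_def by auto
  then show ?thesis using card_ends_Int[of c V1] c by simp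
qed

lemma even_card_V1: "even (card V1)"
proof -
  have "3 * card V1 = 2 * card {e \<in> E. ends e \<subseteq> V1} + 2"
    using cubic_card_boundary[OF V1_subset] boundary_V1 card_C by simp
  then show ?thesis by presburger
qed

lemma boundary_insert_V2:
  assumes x: "x \<in> V1" and all_C: "\<forall>c\<in>C. x \<in> ends c"
  shows "boundary (insert x V2) \<subseteq> {e \<in> E - C. x \<in> ends e}"
proof
  fix e assume e: "e \<in> boundary (insert x V2)"
  then obtain p where eE: "e \<in> E" and p: "p \<in> ends e" "p \<in> insert x V2"
    and out: "\<not> ends e \<subseteq> insert x V2"
    unfolding boundary_def by blast
  show "e \<in> {e \<in> E - C. x \<in> ends e}"
  proof (cases "e \<in> C")
    case True
    obtain y where "ends e \<inter> V1 = {y}"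
      using card_cut_edge_Int_V1[OF True] by (rule card_1_singletonE)
    moreover have "x \<in> ends e \<inter> V1" using all_C True x by blast
    ultimately have "ends e \<inter> V1 = {x}" by simp
    then have "ends e \<subseteq> insert x V2" using ends_subset[OF eE] sides_Un by blast
    then show ?thesis using out by blast
  next
    case False
    have "p \<notin> V2"
    proof
      assume "p \<in> V2"
      then have "ends e \<subseteq> V2" using side_closed[OF V2 _ p(1)] eE False by blast
      then show False using out by blast
    qed
    then show ?thesis using p eE False by auto
  qed
qed

text \<open>A vertex \<open>x\<close> on both cut edges would leave its third edge as the only boundary edge
  of \<open>insert x V2\<close>.\<close>
lemma card_cut_edges_at_le_1:
  assumes x: "x \<in> V1"
  shows "card {c \<in> C. x \<in> ends c} \<le> 1"
proof (rule ccontr)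
  assume "\<not> ?thesis"
  then have "card C \<le> card {c \<in> C. x \<in> ends c}" using card_C by simp
  then have "{c \<in> C. x \<in> ends c} = C" using finite_C by (intro card_seteq) auto
  then have all_C: "\<forall>c\<in>C. x \<in> ends c" by blast
  have xV: "x \<in> V" using x V1_subset by blast
  have "{e \<in> E - C. x \<in> ends e} = {e \<in> E. x \<in> ends e} - C" by blast
  moreover have "C \<subseteq> {e \<in> E. x \<in> ends e}" using all_C C_subset by blast
  ultimately have "card {e \<in> E - C. x \<in> ends e} = card {e \<in> E. x \<in> ends e} - card C"
    using card_Diff_subset[OF finite_C] by simp
  then have one: "card {e \<in> E - C. x \<in> ends e} = 1"
    using degree_eq_3[OF xV] card_C unfolding degree_def by simp
  then obtain f where "{e \<in> E - C. x \<in> ends e} = {f}" by (rule card_1_singletonE)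
  then have f: "f \<in> E - C" "x \<in> ends f" by auto
  obtain a b where "ends f = {a, b}" "a \<noteq> b"
    using card_ends[of f] f(1) by (meson DiffD1 card_2_iff)
  then obtain d where "d \<in> ends f" "d \<noteq> x" by blast
  then have "d \<in> V1 - {x}" using side_closed[OF V1 f x] by blast
  then have "d \<in> V - insert x V2" using V1_subset sides_disjoint by blast
  then have "insert x V2 \<subseteq> V" "insert x V2 \<noteq> {}" "insert x V2 \<noteq> V"
    using xV V2_subset by auto
  then have "2 \<le> card (boundary (insert x V2))" by (rule card_boundary_ge_2)
  moreover have "card (boundary (insert x V2)) \<le> card {e \<in> E - C. x \<in> ends e}"
    using boundary_insert_V2[OF x all_C] finite_E by (intro card_mono) auto
  ultimately show False using one by simp
qed

lemma card_cut_edges_at: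
  assumes "x \<in> V1"
  shows "card {c \<in> C. x \<in> ends c} = (if \<exists>c\<in>C. x \<in> ends c then 1 else 0)"
proof -
  have "finite {c \<in> C. x \<in> ends c}" using finite_C by simp
  then show ?thesis using card_cut_edges_at_le_1[OF assms] by (auto simp: le_Suc_eq)
qed

lemma degree_minus_cut:
  assumes x: "x \<in> V1"
  shows "degree (E - C) ends x = 3 - card {c \<in> C. x \<in> ends c}"
proof -
  have "{e \<in> E - C. x \<in> ends e} = {e \<in> E. x \<in> ends e} - {c \<in> C. x \<in> ends c}" by blast
  moreover have "{c \<in> C. x \<in> ends c} \<subseteq> {e \<in> E. x \<in> ends e}" using C_subset by blast
  ultimately show ?thesis
    using degree_eq_3 x V1_subset finite_C unfolding degree_def by (simp add: card_Diff_subset subset_iff)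
qed

lemma marked_ends_None: "marked_ends E ends C V1 None = cut_vertices C ends V1"
  unfolding marked_ends_def cut_vertices_def using degree_minus_cut card_cut_edges_at
  by (auto split: if_splits)

lemma marked_ends_Some: "marked_ends E ends C V1 (Some e) = ends e"
  unfolding marked_ends_def by simp

lemma degree_marked_ends:
  assumes "finite {e. Some e \<in> M1}"
  shows "degree M1 (marked_ends E ends C V1) u
    = card {e. Some e \<in> M1 \<and> u \<in> ends e} + (if None \<in> M1 \<and> u \<in> cut_vertices C ends V1 then 1 else 0)"
proof -
  have "{x \<in> M1. u \<in> marked_ends E ends C V1 x}
      = Some ` {e. Some e \<in> M1 \<and> u \<in> ends e} \<union> (if None \<in> M1 \<and> u \<in> cut_vertices C ends V1 then {None} else {})"
  proof (rule set_eqI)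
    fix x
    show "x \<in> {x \<in> M1. u \<in> marked_ends E ends C V1 x} \<longleftrightarrow>
        x \<in> Some ` {e. Some e \<in> M1 \<and> u \<in> ends e} \<union> (if None \<in> M1 \<and> u \<in> cut_vertices C ends V1 then {None} else {})"
      by (cases x) (auto simp: marked_ends_None marked_ends_Some)
  qed
  moreover have "finite {e. Some e \<in> M1 \<and> u \<in> ends e}"
    using assms by (rule finite_subset[rotated]) blast
  ultimately show ?thesis
    unfolding degree_def by (simp add: card_Un_disjoint card_image)
qed

lemma degree_marked_eq:
  assumes M: "M \<subseteq> E" "M \<inter> C = {} \<or> C \<subseteq> M"
    and M1_Some: "{e. Some e \<in> M1} = {e \<in> M - C. ends e \<subseteq> V1}"
    and M1_None: "None \<in> M1 \<longleftrightarrow> C \<subseteq> M"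
    and u: "u \<in> V1"
  shows "degree M ends u = degree M1 (marked_ends E ends C V1) u"
proof -
  let ?inner = "{e \<in> M - C. ends e \<subseteq> V1 \<and> u \<in> ends e}"
  let ?cut = "{e \<in> M \<inter> C. u \<in> ends e}"
  have finM: "finite M" using M(1) finite_E finite_subset by blast
  have split: "{e \<in> M. u \<in> ends e} = ?inner \<union> ?cut"
    using side_closed[OF V1 _ _ u] M(1) by blast
  have "degree M ends u = card ?inner + card ?cut"
    unfolding degree_def split using finM by (intro card_Un_disjoint) auto
  moreover have "card ?cut = (if C \<subseteq> M \<and> u \<in> cut_vertices C ends V1 then 1 else 0)"
  proof (cases "C \<subseteq> M")
    case True
    then have "?cut = {c \<in> C. u \<in> ends c}" by blast
    then show ?thesis using card_cut_edges_at[OF u] True u unfolding cut_vertices_def by simp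
  next
    case False
    then have "?cut = {}" using M(2) by blast
    then have "card ?cut = 0" by (simp only: card.empty)
    then show ?thesis using False by simp
  qed
  moreover have "{e. Some e \<in> M1 \<and> u \<in> ends e} = ?inner" using M1_Some by blast
  moreover have "finite {e. Some e \<in> M1}" unfolding M1_Some using finM by simp
  ultimately show ?thesis using M1_None degree_marked_ends by simp
qed

text \<open>Summing \<open>M\<close>-degrees over \<open>V1\<close> gives \<open>card V1 + 2\<close>, which is even, and counts the
  cut edges in \<open>M\<close> once; so \<open>M\<close> contains both cut edges or neither.\<close>
lemma v_matching_cut:
  assumes v: "v \<in> V1" and M: "v_matching V E ends v M"
  shows "M \<inter> C = {} \<or> C \<subseteq> M"
proof -
  have ME: "M \<subseteq> E" using M unfolding v_matching_def by blast
  have finV1: "finite V1" using V1_subset finite_V finite_subset by blast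
  have "(\<Sum>u\<in>V1. degree M ends u) = (\<Sum>u\<in>V1. 1 + (if u = v then 2 else 0))"
    using M V1_subset unfolding v_matching_def by (intro sum.cong) auto
  also have "\<dots> = (\<Sum>u\<in>V1. 1) + (\<Sum>u\<in>V1. if u = v then 2 else 0)"
    by (rule sum.distrib)
  also have "\<dots> = card V1 + 2" using finV1 v by simp
  finally have "card V1 + 2 = 2 * card {e \<in> M. ends e \<subseteq> V1} + card (M \<inter> C)"
    using sum_degree_split[OF ME finV1] boundary_V1 by simp
  then have "even (card (M \<inter> C))" using even_card_V1 by presburger
  moreover have "card (M \<inter> C) \<le> 2" using card_mono[OF finite_C, of "M \<inter> C"] card_C by simp
  ultimately have "card (M \<inter> C) = 0 \<or> card (M \<inter> C) = card C" using card_C by presburger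
  then show ?thesis
    using finite_C card_subset_eq[OF finite_C, of "M \<inter> C"] by auto
qed

lemma lambda_matchable_marked_if_lambda_matchable:
  assumes v: "v \<in> V1" and "lambda_matchable V E ends v"
  shows "lambda_matchable V1 (marked_edges E ends C V1) (marked_ends E ends C V1) v"
proof -
  obtain M where M: "v_matching V E ends v M" using assms(2) unfolding lambda_matchable_def by blast
  have ME: "M \<subseteq> E" using M unfolding v_matching_def by blast
  define M1 where "M1 = Some ` {e \<in> M - C. ends e \<subseteq> V1} \<union> (if C \<subseteq> M then {None} else {})"
  have deg: "degree M ends u = degree M1 (marked_ends E ends C V1) u" if "u \<in> V1" for u
    by (rule degree_marked_eq[OF ME v_matching_cut[OF v M] _ _ that]) (auto simp: M1_def)
  have "M1 \<subseteq> marked_edges E ends C V1" unfolding M1_def marked_edges_def using ME by auto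
  moreover have "degree M1 (marked_ends E ends C V1) v = 3"
    using deg[OF v] M unfolding v_matching_def by simp
  moreover have "degree M1 (marked_ends E ends C V1) u = 1" if u: "u \<in> V1 - {v}" for u
  proof -
    have "degree M ends u = 1" using M u V1_subset unfolding v_matching_def by blast
    then show ?thesis using deg[of u] u by simp
  qed
  ultimately show ?thesis unfolding lambda_matchable_def v_matching_def using v by blast
qed

lemma cut_vertices_pair:
  obtains b1 b2 where "cut_vertices C ends V1 = {b1, b2}" "b1 \<noteq> b2"
proof -
  obtain c1 c2 where C: "C = {c1, c2}" "c1 \<noteq> c2" using card_C by (meson card_2_iff)
  have "card (ends c1 \<inter> V1) = 1" "card (ends c2 \<inter> V1) = 1"
    using card_cut_edge_Int_V1 C by auto
  then obtain b1 b2 where b1: "ends c1 \<inter> V1 = {b1}" and b2: "ends c2 \<inter> V1 = {b2}"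
    by (meson card_1_singletonE)
  have "b1 \<noteq> b2"
  proof
    assume "b1 = b2"
    then have "{c \<in> C. b1 \<in> ends c} = C" using b1 b2 C by blast
    moreover have "b1 \<in> V1" using b1 by blast
    ultimately show False using card_cut_edges_at_le_1[of b1] card_C by simp
  qed
  moreover have "cut_vertices C ends V1 = {b1, b2}" using b1 b2 C unfolding cut_vertices_def by blast
  ultimately show thesis using that by blast
qed

lemma side_perfect_matching:
  obtains P where "P \<subseteq> E" "\<And>e. e \<in> P \<Longrightarrow> ends e \<subseteq> V1" "\<And>u. u \<in> V1 \<Longrightarrow> degree P ends u = 1"
proof -
  have "V1 \<noteq> V" using sides_disjoint V2_nonempty V2_subset by blast
  then show thesis
    by (rule small_boundary_perfect_matching[OF V1_subset _ even_card_V1 _ that])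
      (simp add: boundary_V1 card_C)
qed

lemma side_minus_cut_vertices_perfect_matching:
  obtains P where "P \<subseteq> E" "\<And>e. e \<in> P \<Longrightarrow> ends e \<subseteq> V1 - cut_vertices C ends V1"
    "\<And>u. u \<in> V1 - cut_vertices C ends V1 \<Longrightarrow> degree P ends u = 1"
proof -
  let ?W = "V1 - cut_vertices C ends V1"
  obtain b1 b2 where b: "cut_vertices C ends V1 = {b1, b2}" "b1 \<noteq> b2" by (rule cut_vertices_pair)
  have b_V1: "b1 \<in> V1" "b2 \<in> V1" using b unfolding cut_vertices_def by auto
  have finV1: "finite V1" using V1_subset finite_V finite_subset by blast
  have sub: "?W \<subseteq> V" using V1_subset by blast
  have proper: "?W \<noteq> V" using sides_disjoint V2_nonempty V2_subset by blast
  have "card ?W = card V1 - 2"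
    using b b_V1 finV1 by (simp add: card_Diff_subset)
  moreover have "2 \<le> card V1"
    using b b_V1 finV1 card_mono[of V1 "{b1, b2}"] by simp
  ultimately have even: "even (card ?W)" using even_card_V1 by simp
  have deg2: "card {e \<in> E - C. b \<in> ends e} = 2" if "b \<in> cut_vertices C ends V1" for b
  proof -
    have "b \<in> V1" "\<exists>c\<in>C. b \<in> ends c" using that unfolding cut_vertices_def by auto
    then show ?thesis using degree_minus_cut card_cut_edges_at unfolding degree_def by simp
  qed
  have "boundary ?W \<subseteq> {e \<in> E - C. b1 \<in> ends e} \<union> {e \<in> E - C. b2 \<in> ends e}"
  proof
    fix e assume e: "e \<in> boundary ?W"
    then obtain p r where eE: "e \<in> E" and p: "p \<in> ends e" "p \<in> ?W" and r: "r \<in> ends e" "r \<notin> ?W"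
      unfolding boundary_def by blast
    have "e \<notin> C" using p unfolding cut_vertices_def by blast
    then have "ends e \<subseteq> V1" using side_closed[OF V1 _ p(1)] p eE by blast
    then have "r \<in> {b1, b2}" using r b by blast
    then show "e \<in> {e \<in> E - C. b1 \<in> ends e} \<union> {e \<in> E - C. b2 \<in> ends e}"
      using r eE \<open>e \<notin> C\<close> by auto
  qed
  then have "card (boundary ?W) \<le> card ({e \<in> E - C. b1 \<in> ends e} \<union> {e \<in> E - C. b2 \<in> ends e})"
    using finite_E by (intro card_mono) auto
  also have "\<dots> \<le> 4"
    using card_Un_le[of "{e \<in> E - C. b1 \<in> ends e}" "{e \<in> E - C. b2 \<in> ends e}"] deg2 b(1) by simp
  finally have "card (boundary ?W) \<le> 4" .
  then show thesis by (rule small_boundary_perfect_matching[OF sub proper even _ that])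
qed

context
  fixes M1 :: "'e option set" and P :: "'e set" and W :: "'v set"
  assumes M1: "M1 \<subseteq> marked_edges E ends C V1"
    and W: "W = (if None \<in> M1 then V2 - cut_vertices C ends V2 else V2)"
    and P: "P \<subseteq> E" "\<forall>e\<in>P. ends e \<subseteq> W" "\<forall>u\<in>W. degree P ends u = 1"
begin

private lemma M1_Some: "{e. Some e \<in> M1} \<subseteq> E - C" "Some e \<in> M1 \<Longrightarrow> ends e \<subseteq> V1"
  using M1 unfolding marked_edges_def by auto

private lemma P_V2: "e \<in> P \<Longrightarrow> ends e \<subseteq> V2"
  using P(2) unfolding W by (cases "None \<in> M1") auto

private lemma P_disjoint_C: "P \<inter> C = {}"
proof -
  have "ends c \<inter> V1 \<noteq> {}" if "c \<in> C" for c
    using card_cut_edge_Int_V1[OF that] by auto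
  then show ?thesis using P_V2 sides_disjoint by blast
qed

lemma lifted_edges_subset: "lifted_edges C M1 P \<subseteq> E"
  using M1_Some P(1) C_subset unfolding lifted_edges_def by auto

lemma lifted_edges_cut: "lifted_edges C M1 P \<inter> C = (if None \<in> M1 then C else {})"
  using M1_Some P_disjoint_C unfolding lifted_edges_def by auto

lemma lifted_edges_None: "None \<in> M1 \<longleftrightarrow> C \<subseteq> lifted_edges C M1 P"
  using lifted_edges_cut card_C by (metis card.empty inf.absorb_iff2 zero_neq_numeral)

lemma lifted_edges_Some: "{e. Some e \<in> M1} = {e \<in> lifted_edges C M1 P - C. ends e \<subseteq> V1}"
proof -
  have "ends e \<noteq> {}" if "e \<in> P" for e using card_ends P(1) that by fastforce
  then have "e \<notin> P" if "ends e \<subseteq> V1" for e using that P_V2 sides_disjoint by blast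
  then show ?thesis using M1_Some unfolding lifted_edges_def by auto
qed

lemma degree_lifted_edges_V2:
  assumes u: "u \<in> V2"
  shows "degree (lifted_edges C M1 P) ends u = 1"
proof -
  let ?CM = "if None \<in> M1 then C else {}"
  have "u \<notin> V1" using u sides_disjoint by blast
  then have split: "{e \<in> lifted_edges C M1 P. u \<in> ends e} = {e \<in> ?CM. u \<in> ends e} \<union> {e \<in> P. u \<in> ends e}"
    using M1_Some(2) unfolding lifted_edges_def by blast
  have "finite ?CM" "finite P" using finite_C P(1) finite_E finite_subset by auto
  then have deg: "degree (lifted_edges C M1 P) ends u = card {e \<in> ?CM. u \<in> ends e} + degree P ends u"
    unfolding degree_def split using P_disjoint_C by (intro card_Un_disjoint) auto
  show ?thesis
  proof (cases "None \<in> M1 \<and> u \<in> cut_vertices C ends V2")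
    case True
    interpret other: two_cut_sides V E ends C V2 V1 by (rule two_cut_sides_swap)
    have "card {e \<in> ?CM. u \<in> ends e} = 1"
      using True other.card_cut_edges_at[OF u] unfolding cut_vertices_def by simp
    moreover have "{e \<in> P. u \<in> ends e} = {}" using P(2) True unfolding W by fastforce
    then have "degree P ends u = 0" unfolding degree_def by (simp only: card.empty)
    ultimately show ?thesis using deg by simp
  next
    case False
    then have "{e \<in> ?CM. u \<in> ends e} = {}" using u unfolding cut_vertices_def by auto
    then have "card {e \<in> ?CM. u \<in> ends e} = 0" by (simp only: card.empty)
    moreover have "u \<in> W" using False u unfolding W by auto
    ultimately show ?thesis using deg P(3) by simp
  qed
qed

end

lemma lambda_matchable_if_lambda_matchable_marked:
  assumes v: "v \<in> V1"
    and "lambda_matchable V1 (marked_edges E ends C V1) (marked_ends E ends C V1) v"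
  shows "lambda_matchable V E ends v"
proof -
  interpret other: two_cut_sides V E ends C V2 V1 by (rule two_cut_sides_swap)
  obtain M1 where M1: "v_matching V1 (marked_edges E ends C V1) (marked_ends E ends C V1) v M1"
    using assms(2) unfolding lambda_matchable_def by blast
  have M1_sub: "M1 \<subseteq> marked_edges E ends C V1" using M1 unfolding v_matching_def by blast
  define W where "W = (if None \<in> M1 then V2 - cut_vertices C ends V2 else V2)"
  obtain P where P: "P \<subseteq> E" "\<forall>e\<in>P. ends e \<subseteq> W" "\<forall>u\<in>W. degree P ends u = 1"
  proof (cases "None \<in> M1")
    case True
    obtain P where "P \<subseteq> E" "\<And>e. e \<in> P \<Longrightarrow> ends e \<subseteq> V2 - cut_vertices C ends V2"
      "\<And>u. u \<in> V2 - cut_vertices C ends V2 \<Longrightarrow> degree P ends u = 1"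
      using other.side_minus_cut_vertices_perfect_matching by blast
    then show thesis using True by (intro that[of P]) (simp_all add: W_def)
  next
    case False
    obtain P where "P \<subseteq> E" "\<And>e. e \<in> P \<Longrightarrow> ends e \<subseteq> V2" "\<And>u. u \<in> V2 \<Longrightarrow> degree P ends u = 1"
      using other.side_perfect_matching by blast
    then show thesis using False by (intro that[of P]) (simp_all add: W_def)
  qed
  let ?M = "lifted_edges C M1 P"
  have deg_V1: "degree ?M ends u = degree M1 (marked_ends E ends C V1) u" if "u \<in> V1" for u
  proof (rule degree_marked_eq[OF lifted_edges_subset[OF M1_sub W_def P]])
    show "?M \<inter> C = {} \<or> C \<subseteq> ?M" using lifted_edges_cut[OF M1_sub W_def P] by auto
  qed (fact lifted_edges_Some[OF M1_sub W_def P] lifted_edges_None[OF M1_sub W_def P] that)+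
  have "v_matching V E ends v ?M"
    unfolding v_matching_def
  proof (intro conjI ballI)
    show "?M \<subseteq> E" by (rule lifted_edges_subset[OF M1_sub W_def P])
    show "degree ?M ends v = 3" using deg_V1[OF v] M1 unfolding v_matching_def by simp
    fix u assume "u \<in> V - {v}"
    then consider "u \<in> V1 - {v}" | "u \<in> V2" using sides_Un by blast
    then show "degree ?M ends u = 1"
    proof cases
      case 1
      then show ?thesis using deg_V1 M1 unfolding v_matching_def by simp
    next
      case 2
      then show ?thesis by (rule degree_lifted_edges_V2[OF M1_sub W_def P])
    qed
  qed
  then show ?thesis unfolding lambda_matchable_def using v V1_subset by blast
qed

lemma lambda_matchable_iff_marked:
  "v \<in> V1 \<Longrightarrow> lambda_matchable V E ends v
    \<longleftrightarrow> lambda_matchable V1 (marked_edges E ends C V1) (marked_ends E ends C V1) v"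
  using lambda_matchable_marked_if_lambda_matchable lambda_matchable_if_lambda_matchable_marked by blast

lemma lambda_count_split:
  "lambda_count V E ends =
     lambda_count V1 (marked_edges E ends C V1) (marked_ends E ends C V1)
   + lambda_count V2 (marked_edges E ends C V2) (marked_ends E ends C V2)"
proof -
  interpret other: two_cut_sides V E ends C V2 V1 by (rule two_cut_sides_swap)
  have "{v \<in> V. lambda_matchable V E ends v} =
        {v \<in> V1. lambda_matchable V1 (marked_edges E ends C V1) (marked_ends E ends C V1) v}
      \<union> {v \<in> V2. lambda_matchable V2 (marked_edges E ends C V2) (marked_ends E ends C V2) v}"
    using sides_Un lambda_matchable_iff_marked other.lambda_matchable_iff_marked by blast
  moreover have "finite V1" "finite V2" using V1_subset V2_subset finite_V finite_subset by blast+
  ultimately show ?thesis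
    unfolding lambda_count_def using sides_disjoint by (simp add: card_Un_disjoint disjoint_iff)
qed

end

theorem lemma3p9:
  fixes V :: "'v set" and E :: "'e set" and ends :: "'e \<Rightarrow> 'v set"
    and C :: "'e set" and V1 V2 :: "'v set" and v :: 'v
  assumes "two_connected V E ends" and "cubic V E ends"
    and "two_cut V E ends C"
    and "V1 \<in> components V (E - C) ends" and "V2 \<in> components V (E - C) ends" and "V1 \<noteq> V2"
    and "v \<in> V1"
  shows "(lambda_matchable V E ends v \<longleftrightarrow>
           lambda_matchable V1 (marked_edges E ends C V1) (marked_ends E ends C V1) v)
       \<and> lambda_count V E ends =
           lambda_count V1 (marked_edges E ends C V1) (marked_ends E ends C V1)
         + lambda_count V2 (marked_edges E ends C V2) (marked_ends E ends C V2)"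
proof -
  interpret two_cut_sides V E ends C V1 V2
    using assms(1-6) by unfold_locales
  show ?thesis
    using lambda_matchable_iff_marked[OF assms(7)] lambda_count_split by blast
qed

end
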